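(* Let $G=\{g_1,\dots,g_m\}$ be a finite group and let $\Gamma=(V,E)$ be a finite digraph (loops and multiple arcs allowed) with a voltage assignment $\alpha:E\to G$. Let $B_G$ be the $G$-representation matrix of $(\Gamma,\alpha)$, and define its powers by $B_G^{0}$ with $(B_G^0)_{uv}=\delta_{uv}e_1$ where $g_1$ is the identity and $e_1$ the corresponding unit vector, and $(B_G^{\ell+1})_{uv}=\sum_{w\in V}(B_G^{\ell})_{uw}\ast_G (B_G)_{wv}$. If $(B_G^\ell)_{uv}=(\beta_1,\dots,\beta_m)$, then for every $i=1,\dots,m$ and every $h\in G$ there are exactly $\beta_i$ walks of length $\ell$ in the lift $\Gamma^\alpha$ from vertex $(u,h)$ to vertex $(v,hg_i)$.
   Context: The lift $\Gamma^\alpha$ has vertex set $V\times G$, and for each arc $uv\in E$ and $g\in G$ an arc from $(u,g)$ to $(v,g\alpha(uv))$. For $a,b\in\mathbb{N}^m$ (indexed by the elements of $G$), their $G$-convolution is $a\ast_G b\in\mathbb{N}^m$ with $(a\ast_G b)_i=\sum_{j,k:\,g_jg_k=g_i}a_jb_k$. The $G$-representation matrix $B_G$ is the $V\times V$ matrix whose $uv$-entry is the vector $b_{uv}\in\mathbb{N}^m$ with $(b_{uv})_i$ equal to the number of arcs from $u$ to $v$ with voltage $g_i$. *)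

theory Defs
  imports "HOL-Algebra.Group" "Graph_Theory.Digraph" "Graph_Theory.Arc_Walk"
begin

text \<open>Vectors in N^m indexed by the elements of the group G are functions
  from the carrier of G to nat.\<close>

definition gconv :: "('g, 'b) monoid_scheme \<Rightarrow> ('g \<Rightarrow> nat) \<Rightarrow> ('g \<Rightarrow> nat) \<Rightarrow> ('g \<Rightarrow> nat)" where
  "gconv G a b = (\<lambda>g. \<Sum>(j,k) \<in> {(j,k). j \<in> carrier G \<and> k \<in> carrier G \<and> j \<otimes>\<^bsub>G\<^esub> k = g}. a j * b k)"

definition rep_matrix :: "('v,'e) pre_digraph \<Rightarrow> ('e \<Rightarrow> 'g) \<Rightarrow> 'v \<Rightarrow> 'v \<Rightarrow> 'g \<Rightarrow> nat" where
  "rep_matrix \<Gamma> \<alpha> u v g = card {e \<in> arcs \<Gamma>. tail \<Gamma> e = u \<and> head \<Gamma> e = v \<and> \<alpha> e = g}"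

fun rep_matrix_pow :: "('g, 'b) monoid_scheme \<Rightarrow> ('v,'e) pre_digraph \<Rightarrow> ('e \<Rightarrow> 'g) \<Rightarrow> nat \<Rightarrow> 'v \<Rightarrow> 'v \<Rightarrow> 'g \<Rightarrow> nat" where
  "rep_matrix_pow G \<Gamma> \<alpha> 0 u v = (\<lambda>g. if u = v \<and> g = \<one>\<^bsub>G\<^esub> then 1 else 0)"
| "rep_matrix_pow G \<Gamma> \<alpha> (Suc l) u v =
     (\<lambda>g. \<Sum>w \<in> verts \<Gamma>. gconv G (rep_matrix_pow G \<Gamma> \<alpha> l u w) (rep_matrix \<Gamma> \<alpha> w v) g)"

definition lift :: "('g, 'b) monoid_scheme \<Rightarrow> ('v,'e) pre_digraph \<Rightarrow> ('e \<Rightarrow> 'g) \<Rightarrow> ('v \<times> 'g, 'e \<times> 'g) pre_digraph" where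
  "lift G \<Gamma> \<alpha> = \<lparr> verts = verts \<Gamma> \<times> carrier G, arcs = arcs \<Gamma> \<times> carrier G,
     tail = (\<lambda>(e,g). (tail \<Gamma> e, g)), head = (\<lambda>(e,g). (head \<Gamma> e, g \<otimes>\<^bsub>G\<^esub> \<alpha> e)) \<rparr>"

end

theory Submission
  imports Defs
begin

text \<open>Both sides satisfy the same recursion in the walk length. A walk of length \<open>l + 1\<close>
  in the lift ending at \<open>(v, h g)\<close> ends with the unique lift \<open>(e, h g \<alpha>(e)\<inverse>)\<close> of an
  arc \<open>e\<close> into \<open>v\<close>, so it is a walk of length \<open>l\<close> to \<open>(tail e, h (g \<alpha>(e)\<inverse>))\<close>
  followed by that arc. On the matrix side, writing the convolution over \<open>j k = g\<close> as a sum
  over \<open>k\<close> of terms at \<open>g k\<inverse>\<close>, the arcs from \<open>w\<close> to \<open>v\<close> with voltage \<open>k\<close>, summed over \<open>k\<close>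
  and \<open>w\<close>, are exactly the arcs into \<open>v\<close>.\<close>

lemma cas_snoc_iff:
  "pre_digraph.cas H u (p @ [a]) v \<longleftrightarrow> pre_digraph.cas H u p (tail H a) \<and> head H a = v"
  by (induction p arbitrary: u) (auto simp: pre_digraph.cas.simps)

lemma awalk_snoc_iff:
  "pre_digraph.awalk H u (p @ [a]) v \<longleftrightarrow>
     pre_digraph.awalk H u p (tail H a) \<and> a \<in> arcs H \<and> head H a = v"
  by (auto simp: pre_digraph.awalk_def cas_snoc_iff)

lemma finite_awalks_length:
  assumes "finite (arcs H)"
  shows "finite {p. pre_digraph.awalk H u p v \<and> length p = l}"
proof (rule finite_subset)
  show "{p. pre_digraph.awalk H u p v \<and> length p = l} \<subseteq> {p. set p \<subseteq> arcs H \<and> length p = l}"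
    by (auto simp: pre_digraph.awalk_def)
qed (rule finite_lists_length_eq[OF assms])

lemma card_awalks_Suc:
  assumes "finite (arcs H)"
  shows "card {p. pre_digraph.awalk H u p v \<and> length p = Suc l}
    = (\<Sum>a\<in>in_arcs H v. card {p. pre_digraph.awalk H u p (tail H a) \<and> length p = l})"
proof -
  define W where "W a = {p. pre_digraph.awalk H u p (tail H a) \<and> length p = l}" for a
  have "{p. pre_digraph.awalk H u p v \<and> length p = Suc l} = (\<Union>a\<in>in_arcs H v. (\<lambda>p. p @ [a]) ` W a)"
  proof (intro equalityI subsetI)
    fix q assume "q \<in> {p. pre_digraph.awalk H u p v \<and> length p = Suc l}"
    moreover from this obtain p a where "q = p @ [a]"
      by (metis (mono_tags) length_Suc_conv_rev mem_Collect_eq)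
    ultimately show "q \<in> (\<Union>a\<in>in_arcs H v. (\<lambda>p. p @ [a]) ` W a)"
      by (auto simp: awalk_snoc_iff W_def)
  qed (auto simp: awalk_snoc_iff W_def)
  also have "card \<dots> = (\<Sum>a\<in>in_arcs H v. card ((\<lambda>p. p @ [a]) ` W a))"
    using assms by (intro card_UN_disjoint) (auto simp: in_arcs_def W_def intro: finite_awalks_length)
  also have "\<dots> = (\<Sum>a\<in>in_arcs H v. card (W a))"
    by (intro sum.cong refl card_image) (auto simp: inj_on_def)
  finally show ?thesis by (simp add: W_def)
qed

lemma tail_lift: "tail (lift G \<Gamma> \<alpha>) (e, x) = (tail \<Gamma> e, x)"
  by (simp add: lift_def)

context group
begin

lemma gconv_eq_sum:
  assumes "g \<in> carrier G"
  shows "gconv G a b g = (\<Sum>k\<in>carrier G. a (g \<otimes> inv k) * b k)"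
proof -
  have "{(j, k). j \<in> carrier G \<and> k \<in> carrier G \<and> j \<otimes> k = g} = (\<lambda>k. (g \<otimes> inv k, k)) ` carrier G"
    using assms by (auto simp: m_assoc intro!: image_eqI)
  then show ?thesis
    by (simp add: gconv_def sum.reindex inj_on_def)
qed

lemma in_arcs_lift:
  assumes "x \<in> carrier G" and "\<And>e. e \<in> arcs \<Gamma> \<Longrightarrow> \<alpha> e \<in> carrier G"
  shows "in_arcs (lift G \<Gamma> \<alpha>) (v, x) = (\<lambda>e. (e, x \<otimes> inv (\<alpha> e))) ` in_arcs \<Gamma> v"
  using assms by (force simp: lift_def in_arcs_def m_assoc inv_solve_right)

lemma rep_matrix_pow_Suc_in_arcs:
  assumes "finite (carrier G)" and "fin_digraph \<Gamma>" and \<alpha>: "\<And>e. e \<in> arcs \<Gamma> \<Longrightarrow> \<alpha> e \<in> carrier G"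
    and "g \<in> carrier G"
  shows "rep_matrix_pow G \<Gamma> \<alpha> (Suc l) u v g
    = (\<Sum>e\<in>in_arcs \<Gamma> v. rep_matrix_pow G \<Gamma> \<alpha> l u (tail \<Gamma> e) (g \<otimes> inv (\<alpha> e)))"
proof -
  interpret fin_digraph \<Gamma> by fact
  let ?P = "\<lambda>w. rep_matrix_pow G \<Gamma> \<alpha> l u w"
  have "gconv G (?P w) (rep_matrix \<Gamma> \<alpha> w v) g
      = (\<Sum>e\<in>{e \<in> in_arcs \<Gamma> v. tail \<Gamma> e = w}. ?P (tail \<Gamma> e) (g \<otimes> inv (\<alpha> e)))" for w
  proof -
    have "gconv G (?P w) (rep_matrix \<Gamma> \<alpha> w v) g
        = (\<Sum>k\<in>carrier G. \<Sum>e\<in>{e \<in> in_arcs \<Gamma> v. tail \<Gamma> e = w \<and> \<alpha> e = k}. ?P w (g \<otimes> inv k))"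
      using assms(4) by (simp add: gconv_eq_sum rep_matrix_def conj_ac mult.commute)
    also have "\<dots> = (\<Sum>k\<in>carrier G. \<Sum>e\<in>{e \<in> {e \<in> in_arcs \<Gamma> v. tail \<Gamma> e = w}. \<alpha> e = k}.
                      ?P (tail \<Gamma> e) (g \<otimes> inv (\<alpha> e)))"
      by (intro sum.cong) auto
    also have "\<dots> = (\<Sum>e\<in>{e \<in> in_arcs \<Gamma> v. tail \<Gamma> e = w}. ?P (tail \<Gamma> e) (g \<otimes> inv (\<alpha> e)))"
      using assms(1) \<alpha> by (intro sum.group) auto
    finally show ?thesis .
  qed
  then have "rep_matrix_pow G \<Gamma> \<alpha> (Suc l) u v g
      = (\<Sum>w\<in>verts \<Gamma>. \<Sum>e\<in>{e \<in> in_arcs \<Gamma> v. tail \<Gamma> e = w}. ?P (tail \<Gamma> e) (g \<otimes> inv (\<alpha> e)))"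
    by simp
  also have "\<dots> = (\<Sum>e\<in>in_arcs \<Gamma> v. ?P (tail \<Gamma> e) (g \<otimes> inv (\<alpha> e)))"
    by (intro sum.group) auto
  finally show ?thesis .
qed

end

theorem lemma4p2:
  fixes G :: "('g, 'b) monoid_scheme" and \<Gamma> :: "('v,'e) pre_digraph" and \<alpha> :: "'e \<Rightarrow> 'g"
  assumes "group G" and "finite (carrier G)"
    and "fin_digraph \<Gamma>"
    and "\<And>e. e \<in> arcs \<Gamma> \<Longrightarrow> \<alpha> e \<in> carrier G"
    and "u \<in> verts \<Gamma>" and "v \<in> verts \<Gamma>"
    and "g \<in> carrier G" and "h \<in> carrier G"
  shows "card {p. pre_digraph.awalk (lift G \<Gamma> \<alpha>) (u, h) p (v, h \<otimes>\<^bsub>G\<^esub> g) \<and> length p = l}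
         = rep_matrix_pow G \<Gamma> \<alpha> l u v g"
  using assms(6,7)
proof (induction l arbitrary: v g)
  case 0
  interpret group G by fact
  have "h \<otimes>\<^bsub>G\<^esub> g = h \<longleftrightarrow> g = \<one>\<^bsub>G\<^esub>"
    using 0 assms(8) by (metis l_cancel_one one_closed r_one)
  then have "{p. pre_digraph.awalk (lift G \<Gamma> \<alpha>) (u, h) p (v, h \<otimes>\<^bsub>G\<^esub> g) \<and> length p = 0}
      = (if u = v \<and> g = \<one>\<^bsub>G\<^esub> then {[]} else {})"
    using assms(5,8) by (auto simp: pre_digraph.awalk_def pre_digraph.cas.simps lift_def)
  then show ?case by simp
next
  case (Suc l)
  interpret group G by fact
  interpret fin_digraph \<Gamma> by fact
  let ?L = "lift G \<Gamma> \<alpha>"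
  have "finite (arcs ?L)"
    using assms(2) by (simp add: lift_def)
  then have "card {p. pre_digraph.awalk ?L (u, h) p (v, h \<otimes>\<^bsub>G\<^esub> g) \<and> length p = Suc l}
      = (\<Sum>a\<in>in_arcs ?L (v, h \<otimes>\<^bsub>G\<^esub> g). card {p. pre_digraph.awalk ?L (u, h) p (tail ?L a) \<and> length p = l})"
    by (rule card_awalks_Suc)
  also have "\<dots> = (\<Sum>e\<in>in_arcs \<Gamma> v. card {p. pre_digraph.awalk ?L (u, h) p
                                (tail \<Gamma> e, h \<otimes>\<^bsub>G\<^esub> (g \<otimes>\<^bsub>G\<^esub> inv\<^bsub>G\<^esub> (\<alpha> e))) \<and> length p = l})"
    using Suc.prems assms(4,8)
    by (simp add: in_arcs_lift sum.reindex inj_on_def tail_lift m_assoc)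
  also have "\<dots> = (\<Sum>e\<in>in_arcs \<Gamma> v. rep_matrix_pow G \<Gamma> \<alpha> l u (tail \<Gamma> e) (g \<otimes>\<^bsub>G\<^esub> inv\<^bsub>G\<^esub> (\<alpha> e)))"
    using Suc.prems assms(4) by (intro sum.cong refl Suc.IH) auto
  also have "\<dots> = rep_matrix_pow G \<Gamma> \<alpha> (Suc l) u v g"
    by (rule rep_matrix_pow_Suc_in_arcs[OF assms(2-4) Suc.prems(2), symmetric])
  finally show ?case .
qed

end
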